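(* For any finite word $e=s_1s_2\cdots s_m$ in the letters $f,g$ there is a formula \[e(z,x)=xz^m+\sum_{j=0}^m a_jz^j\] valid for all $z,x$, where each $a_j\in\{-1,0,1\}$, $a_m=0$ if $e$ ends with $f$, and $a_m=-1$ if $e$ ends with $g$. Furthermore, $a_0,a_1,\dots,a_{m-1}$ (in order) are the labels of the vertices visited, after the initial vertex, by the walk in the directed graph $\mathcal{G}$ that starts at the vertex $*$ and follows the edges labeled $s_1,s_2,\dots,s_m$ in turn. Thus the sequences $(a_0,\dots,a_{m-1})$ that occur are precisely the sequences in $\{-1,0,1\}$ whose nonzero entries alternate between $1$ and $-1$, starting with $1$. Similarly, for any right-infinite word $e$ in $f,g$, \[\pi(e,z)=\sum_{j=0}^\infty a_jz^j,\] where each $a_j\in\{-1,0,1\}$ and $a_0,a_1,\dots$ are the labels of the vertices visited (after the initial one) by the right-infinite walk in $\mathcal{G}$ from $*$ determined by $e$.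
   Context: For $z\in\mathbb{D}^*=\{0<|z|<1\}$, $f(x)=zx$ and $g(x)=z(x-1)+1$. For a finite word $e=s_1\cdots s_m$, $e(z,x)=s_1(s_2(\cdots s_m(x)))$. For a right-infinite word $e$, $\pi(e,z)=\lim_{n\to\infty}e_n(z,x)$ where $e_n$ is the prefix of length $n$ (the limit is independent of $x$). The graph $\mathcal{G}$ has five vertices: $*$ (unlabeled start), a vertex labeled $1$, a vertex labeled $-1$, and two vertices $0_f$, $0_g$ each labeled $0$. Its edges are: $*\xrightarrow{f}0_f$, $*\xrightarrow{g}1$; $0_f\xrightarrow{f}0_f$, $0_f\xrightarrow{g}1$; $1\xrightarrow{f}-1$, $1\xrightarrow{g}0_g$; $0_g\xrightarrow{g}0_g$, $0_g\xrightarrow{f}-1$; $-1\xrightarrow{f}0_f$, $-1\xrightarrow{g}1$. *)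

theory Defs
  imports Complex_Main
begin

datatype letter = F | G

definition fmap :: "complex \<Rightarrow> complex \<Rightarrow> complex" where
  "fmap z x = z * x"

definition gmap :: "complex \<Rightarrow> complex \<Rightarrow> complex" where
  "gmap z x = z * (x - 1) + 1"

definition letter_map :: "letter \<Rightarrow> complex \<Rightarrow> complex \<Rightarrow> complex" where
  "letter_map s z x = (case s of F \<Rightarrow> fmap z x | G \<Rightarrow> gmap z x)"

fun word_eval :: "letter list \<Rightarrow> complex \<Rightarrow> complex \<Rightarrow> complex" where
  "word_eval [] z x = x"
| "word_eval (s # w) z x = letter_map s z (word_eval w z x)"

datatype vertex = Star | One | MinusOne | Zero_f | Zero_g

fun label :: "vertex \<Rightarrow> int" where
  "label Star = 0"  (* the start vertex is unlabeled; this value is never used *)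
| "label One = 1"
| "label MinusOne = -1"
| "label Zero_f = 0"
| "label Zero_g = 0"

fun step :: "vertex \<Rightarrow> letter \<Rightarrow> vertex" where
  "step Star F = Zero_f"
| "step Star G = One"
| "step Zero_f F = Zero_f"
| "step Zero_f G = One"
| "step One F = MinusOne"
| "step One G = Zero_g"
| "step Zero_g G = Zero_g"
| "step Zero_g F = MinusOne"
| "step MinusOne F = Zero_f"
| "step MinusOne G = One"

fun walk :: "vertex \<Rightarrow> letter list \<Rightarrow> vertex list" where
  "walk v [] = []"
| "walk v (s # w) = step v s # walk (step v s) w"

fun ivert :: "(nat \<Rightarrow> letter) \<Rightarrow> nat \<Rightarrow> vertex" where
  "ivert e 0 = Star"
| "ivert e (Suc n) = step (ivert e n) (e n)"

definition alternating :: "int list \<Rightarrow> bool" where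
  "alternating l \<longleftrightarrow> set l \<subseteq> {-1, 0, 1} \<and>
     (\<forall>i < length (filter (\<lambda>a. a \<noteq> 0) l). filter (\<lambda>a. a \<noteq> 0) l ! i = (-1) ^ i)"

end

theory Submission
  imports Defs
begin

text \<open>Since g(y) = z y + (1 - z), reading the word from the left each letter g adds 1 to the
current coefficient and -1 to the next one. Hence a_j = [s_(j+1) = g] - [s_j = g] (with no
letter before s_1), and the vertices of the graph record exactly this: 1 and 0_g are entered by g,
0_f and -1 by f, and the label of the vertex reached by s_(j+1) is the difference above. The
differences of a 0/1 sequence starting at 0 are precisely the sequences whose nonzero entries
alternate 1, -1, 1, ... For an infinite word the coefficients of the prefixes stabilise, they are
bounded, and the remaining terms x z^n and a_n z^n tend to 0 for |z| < 1.\<close>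

fun entered_by_g :: "vertex \<Rightarrow> bool" where
  "entered_by_g Star = False"
| "entered_by_g Zero_f = False"
| "entered_by_g MinusOne = False"
| "entered_by_g One = True"
| "entered_by_g Zero_g = True"

lemma entered_by_g_step: "entered_by_g (step v s) \<longleftrightarrow> s = G"
  by (cases v; cases s; simp)

lemma label_step: "of_bool (entered_by_g v) + label (step v s) = of_bool (s = G)"
  by (cases v; cases s; simp)

lemma label_cases: "label v = -1 \<or> label v = 0 \<or> label v = 1"
  by (cases v; simp)

lemma label_in_range: "label v \<in> {-1, 0, 1}"
  using label_cases by auto

fun walk_end :: "vertex \<Rightarrow> letter list \<Rightarrow> vertex" where
  "walk_end v [] = v"
| "walk_end v (s # w) = walk_end (step v s) w"

lemma length_walk [simp]: "length (walk v w) = length w"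
  by (induction w arbitrary: v) auto

lemma walk_append: "walk v (w @ u) = walk v w @ walk (walk_end v w) u"
  by (induction w arbitrary: v) auto

lemma walk_end_append: "walk_end v (w @ u) = walk_end (walk_end v w) u"
  by (induction w arbitrary: v) auto

lemma entered_by_g_walk_end: "w \<noteq> [] \<Longrightarrow> entered_by_g (walk_end v w) \<longleftrightarrow> last w = G"
  by (induction w arbitrary: v rule: induct_list012) (auto simp: entered_by_g_step)

text \<open>The coefficients of the polynomial attached to a word read from vertex v; the extra
constant of_bool (entered_by_g v) in the expansion below is what makes the induction go through.\<close>

fun walk_coeff :: "vertex \<Rightarrow> letter list \<Rightarrow> nat \<Rightarrow> int" where
  "walk_coeff v [] j = (if j = 0 then - of_bool (entered_by_g v) else 0)"
| "walk_coeff v (s # w) j =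
     (if j = 0 then label (step v s) else walk_coeff (step v s) w (j - 1))"

lemma walk_coeff_in_range: "walk_coeff v w j \<in> {-1, 0, 1}"
  by (induction w arbitrary: v j) (auto simp: label_cases)

lemma walk_coeff_nth_walk: "j < length w \<Longrightarrow> walk_coeff v w j = label (walk v w ! j)"
  by (induction w arbitrary: v j) (auto simp: nth_Cons split: nat.splits)

lemma map_walk_coeff: "map (walk_coeff v w) [0..<length w] = map label (walk v w)"
  by (rule nth_equalityI) (auto simp: walk_coeff_nth_walk)

lemma walk_coeff_length: "walk_coeff v w (length w) = - of_bool (entered_by_g (walk_end v w))"
  by (induction w arbitrary: v) auto

lemma word_eval_walk_coeff:
  "word_eval w z x
     = x * z ^ length w + of_bool (entered_by_g v) + (\<Sum>j\<le>length w. of_int (walk_coeff v w j) * z ^ j)"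
proof (induction w arbitrary: v)
  case Nil
  then show ?case by simp
next
  case (Cons s w)
  define v' where "v' = step v s"
  define S where "S = (\<Sum>j\<le>length w. of_int (walk_coeff v' w j) * z ^ j)"
  have IH: "word_eval w z x = x * z ^ length w + of_bool (s = G) + S"
    using Cons.IH[of v'] by (simp add: S_def v'_def entered_by_g_step)
  have "(\<Sum>j\<le>Suc (length w). of_int (walk_coeff v (s # w) j) * z ^ j)
      = of_int (walk_coeff v (s # w) 0) * z ^ 0
        + (\<Sum>j\<le>length w. of_int (walk_coeff v (s # w) (Suc j)) * z ^ Suc j)"
    by (rule sum.atMost_Suc_shift)
  then have sum: "(\<Sum>j\<le>length (s # w). of_int (walk_coeff v (s # w) j) * z ^ j)
      = of_int (label v') + z * S"
    by (simp add: S_def v'_def sum_distrib_left mult_ac)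
  have "of_bool (entered_by_g v) + (of_int (label v') :: complex) = of_bool (s = G)"
    using label_step[of v s] unfolding v'_def by (metis of_int_add of_int_of_bool)
  then show ?case
    unfolding sum word_eval.simps IH
    by (cases s) (auto simp: letter_map_def fmap_def gmap_def algebra_simps)
qed

lemma word_eval_expansion:
  "\<exists>a :: nat \<Rightarrow> int.
      (\<forall>z x. word_eval e z x = x * z ^ length e + (\<Sum>j\<le>length e. of_int (a j) * z ^ j))
    \<and> (\<forall>j\<le>length e. a j \<in> {-1, 0, 1})
    \<and> (e \<noteq> [] \<and> last e = F \<longrightarrow> a (length e) = 0)
    \<and> (e \<noteq> [] \<and> last e = G \<longrightarrow> a (length e) = -1)
    \<and> map a [0..<length e] = map label (walk Star e)"
  using word_eval_walk_coeff[of e _ _ Star] walk_coeff_in_range[of Star e]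
    walk_coeff_length[of Star e] entered_by_g_walk_end[of e Star] map_walk_coeff[of Star e]
  by (intro exI[of _ "walk_coeff Star e"]) auto

fun alternates :: "bool \<Rightarrow> int list \<Rightarrow> bool" where
  "alternates b [] = True"
| "alternates b (a # l) =
     (if a = 0 then alternates b l else a = (if b then -1 else 1) \<and> alternates (\<not> b) l)"

lemma alternates_iff:
  "alternates b l \<longleftrightarrow> set l \<subseteq> {-1, 0, 1} \<and>
     (\<forall>i < length (filter (\<lambda>a. a \<noteq> 0) l).
        filter (\<lambda>a. a \<noteq> 0) l ! i = (if b then - ((-1) ^ i) else (-1) ^ i))"
proof (induction l arbitrary: b)
  case Nil
  then show ?case by simp
next
  case (Cons a l)
  then show ?case
    using Cons.IH[of b] Cons.IH[of "\<not> b"] by (cases "a = 0") (auto simp: All_less_Suc2)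
qed

lemma alternating_iff_alternates: "alternating l \<longleftrightarrow> alternates False l"
  unfolding alternating_def alternates_iff by simp

lemma alternates_walk_labels: "alternates (entered_by_g v) (map label (walk v e))"
proof (induction e arbitrary: v)
  case (Cons s e)
  then show ?case
    using Cons.IH[of "step v s"] by (cases v; cases s; simp)
qed simp

lemma walk_labels_if_alternates:
  "alternates (entered_by_g v) l \<Longrightarrow> \<exists>e. map label (walk v e) = l"
proof (induction l arbitrary: v)
  case Nil
  then show ?case by (intro exI[of _ "[]"]) simp
next
  case (Cons a l)
  \<comment> \<open>a zero keeps the last letter, a nonzero entry switches it\<close>
  define s where "s = (if (a = 0) = entered_by_g v then G else F)"
  have label: "label (step v s) = a"
    and next_g: "entered_by_g (step v s) = (if a = 0 then entered_by_g v else \<not> entered_by_g v)"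
    using Cons.prems unfolding s_def by (cases v; auto split: if_splits)+
  have "alternates (entered_by_g (step v s)) l"
    using Cons.prems next_g by (auto split: if_splits)
  then obtain e where "map label (walk (step v s) e) = l"
    using Cons.IH by blast
  then show ?case
    using label by (intro exI[of _ "s # e"]) simp
qed

lemma walk_labels_eq_alternating: "{map label (walk Star e) | e. True} = {l. alternating l}"
  using alternates_walk_labels[of Star] walk_labels_if_alternates[of Star]
  by (auto simp: alternating_iff_alternates)

lemma walk_end_prefix: "walk_end Star (map e [0..<n]) = ivert e n"
  by (induction n) (auto simp: walk_end_append)

lemma nth_walk_prefix: "j < n \<Longrightarrow> walk Star (map e [0..<n]) ! j = ivert e (Suc j)"
proof (induction n)
  case 0
  then show ?case by simp
next
  case (Suc n)
  then show ?case
    by (cases "j < n") (auto simp: walk_append nth_append walk_end_prefix less_Suc_eq)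
qed

lemma word_eval_prefix:
  "word_eval (map e [0..<n]) z x
     = x * z ^ n + (\<Sum>j<n. of_int (label (ivert e (Suc j))) * z ^ j)
       - of_bool (entered_by_g (ivert e n)) * z ^ n"
proof -
  let ?w = "map e [0..<n]"
  have "word_eval ?w z x = x * z ^ n + (\<Sum>j\<le>n. of_int (walk_coeff Star ?w j) * z ^ j)"
    using word_eval_walk_coeff[of ?w z x Star] by simp
  also have "(\<Sum>j\<le>n. of_int (walk_coeff Star ?w j) * z ^ j)
      = (\<Sum>j<n. of_int (walk_coeff Star ?w j) * z ^ j) + of_int (walk_coeff Star ?w n) * z ^ n"
    by (simp add: lessThan_Suc_atMost[symmetric])
  also have "(\<Sum>j<n. of_int (walk_coeff Star ?w j) * z ^ j)
      = (\<Sum>j<n. of_int (label (ivert e (Suc j))) * z ^ j)"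
    by (rule sum.cong) (auto simp: walk_coeff_nth_walk nth_walk_prefix)
  finally show ?thesis
    using walk_coeff_length[of Star ?w] by (simp add: walk_end_prefix)
qed

lemma summable_unit_coeffs:
  fixes z :: complex
  assumes "norm z < 1" and "\<And>j. c j \<in> {-1, 0, 1::int}"
  shows "summable (\<lambda>j. of_int (c j) * z ^ j)"
proof (rule summable_comparison_test[where g = "\<lambda>j. norm z ^ j"])
  have "norm (of_int (c n) :: complex) \<le> 1" for n
    using assms(2)[of n] by auto
  then show "\<exists>N. \<forall>n\<ge>N. norm (of_int (c n) * z ^ n) \<le> norm z ^ n"
    by (simp add: norm_mult norm_power mult_left_le_one_le)
  show "summable (\<lambda>j. norm z ^ j)"
    using assms(1) by (simp add: summable_geometric)
qed

lemma infinite_word_expansion: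
  fixes e :: "nat \<Rightarrow> letter" and z :: complex
  assumes "norm z < 1"
  defines "a \<equiv> \<lambda>j. label (ivert e (Suc j))"
  shows "(\<lambda>j. of_int (a j) * z ^ j) sums (\<Sum>j. of_int (a j) * z ^ j)"
    and "(\<lambda>n. word_eval (map e [0..<n]) z x) \<longlonglongrightarrow> (\<Sum>j. of_int (a j) * z ^ j)"
proof -
  have summable_a: "summable (\<lambda>j. of_int (a j) * z ^ j)"
    using assms(1) by (rule summable_unit_coeffs) (simp only: a_def label_in_range)
  then show "(\<lambda>j. of_int (a j) * z ^ j) sums (\<Sum>j. of_int (a j) * z ^ j)"
    by (rule summable_sums)
  define c where "c = (\<lambda>n. - of_bool (entered_by_g (ivert e n)) :: int)"
  have summable_c: "summable (\<lambda>n. of_int (c n) * z ^ n)"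
    using assms(1) by (rule summable_unit_coeffs) (simp add: c_def)
  have "(\<lambda>n. x * z ^ n + (\<Sum>j<n. of_int (a j) * z ^ j) + of_int (c n) * z ^ n)
      \<longlonglongrightarrow> x * 0 + (\<Sum>j. of_int (a j) * z ^ j) + 0"
    by (intro tendsto_intros LIMSEQ_power_zero assms(1) summable_LIMSEQ summable_a
        summable_LIMSEQ_zero summable_c)
  then show "(\<lambda>n. word_eval (map e [0..<n]) z x) \<longlonglongrightarrow> (\<Sum>j. of_int (a j) * z ^ j)"
    by (simp add: word_eval_prefix a_def c_def)
qed

theorem proposition4p2p1:
  shows
  "(\<forall>e :: letter list. \<exists>a :: nat \<Rightarrow> int.
      (\<forall>z x. word_eval e z x = x * z ^ length e + (\<Sum>j\<le>length e. of_int (a j) * z ^ j))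
    \<and> (\<forall>j\<le>length e. a j \<in> {-1, 0, 1})
    \<and> (e \<noteq> [] \<and> last e = F \<longrightarrow> a (length e) = 0)
    \<and> (e \<noteq> [] \<and> last e = G \<longrightarrow> a (length e) = -1)
    \<and> map a [0..<length e] = map label (walk Star e))
  \<and> {map label (walk Star e) | e. True} = {l. alternating l}
  \<and> (\<forall>e :: nat \<Rightarrow> letter. \<exists>a :: nat \<Rightarrow> int.
      (\<forall>j. a j \<in> {-1, 0, 1})
    \<and> (\<forall>j. a j = label (ivert e (Suc j)))
    \<and> (\<forall>z :: complex. 0 < norm z \<and> norm z < 1 \<longrightarrow>
          (\<lambda>j. of_int (a j) * z ^ j) sums (\<Sum>j. of_int (a j) * z ^ j)
        \<and> (\<forall>x. (\<lambda>n. word_eval (map e [0..<n]) z x) \<longlonglongrightarrow> (\<Sum>j. of_int (a j) * z ^ j))))"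
proof (intro conjI allI)
  show "{map label (walk Star e) | e. True} = {l. alternating l}"
    by (rule walk_labels_eq_alternating)
next
  fix e :: "nat \<Rightarrow> letter"
  show "\<exists>a :: nat \<Rightarrow> int. (\<forall>j. a j \<in> {-1, 0, 1})
    \<and> (\<forall>j. a j = label (ivert e (Suc j)))
    \<and> (\<forall>z :: complex. 0 < norm z \<and> norm z < 1 \<longrightarrow>
          (\<lambda>j. of_int (a j) * z ^ j) sums (\<Sum>j. of_int (a j) * z ^ j)
        \<and> (\<forall>x. (\<lambda>n. word_eval (map e [0..<n]) z x) \<longlonglongrightarrow> (\<Sum>j. of_int (a j) * z ^ j)))"
    using infinite_word_expansion[of _ e] label_in_range
    by (intro exI[of _ "\<lambda>j. label (ivert e (Suc j))"]) blast
qed (rule word_eval_expansion)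

end
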